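(* The linear map $F(L)\to F(A)$ sending the class of $a\otimes b$ ($a,b\in L$) to $\operatorname{tr}(ab)$ is injective.
   Context: $A=\mathbb{R}\langle x,y\rangle$ is the free associative algebra and $L\subset A$ the free Lie algebra on $x,y$ (smallest Lie subalgebra of $(A,[a,b]=ab-ba)$ containing $x,y$). $F(A)$ is the quotient of $A\otimes A$ by the span of $a\otimes b-b\otimes a$ and $a\otimes bc-ab\otimes c$, identified with $A/\operatorname{span}\{ab-ba\}$ via $a\otimes b\mapsto \operatorname{tr}(ab)$, where $\operatorname{tr}$ denotes the projection $A\to A/\operatorname{span}\{ab-ba\}$. $F(L)$ is the quotient of $L\otimes L$ by the span of $a\otimes b-b\otimes a$ and $a\otimes[b,c]-[a,b]\otimes c$ ($a,b,c\in L$). *)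

theory Defs
  imports Complex_Main "HOL-Library.Function_Algebras"
begin

text \<open>The free associative algebra A = R<x,y>: finitely supported real functions on
  words over the alphabet bool (False stands for x, True for y).\<close>

type_synonym ncpoly = "bool list \<Rightarrow> real"
type_synonym nctensor = "bool list \<times> bool list \<Rightarrow> real"

definition fscale :: "real \<Rightarrow> ('a \<Rightarrow> real) \<Rightarrow> ('a \<Rightarrow> real)" where
  "fscale c f = (\<lambda>w. c * f w)"

abbreviation rspan :: "('a \<Rightarrow> real) set \<Rightarrow> ('a \<Rightarrow> real) set" where
  "rspan S \<equiv> module.span fscale S"

definition Aset :: "ncpoly set" where
  "Aset = {f. finite {w. f w \<noteq> 0}}"

definition ncmul :: "ncpoly \<Rightarrow> ncpoly \<Rightarrow> ncpoly" where
  "ncmul f g = (\<lambda>w. \<Sum>i\<in>{0..length w}. f (take i w) * g (drop i w))"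

definition gen :: "bool \<Rightarrow> ncpoly" where
  "gen b = (\<lambda>w. if w = [b] then 1 else 0)"

definition lie_br :: "ncpoly \<Rightarrow> ncpoly \<Rightarrow> ncpoly" where
  "lie_br a b = ncmul a b - ncmul b a"

inductive_set FreeLie :: "ncpoly set" where
  gen: "gen b \<in> FreeLie"
| add: "a \<in> FreeLie \<Longrightarrow> b \<in> FreeLie \<Longrightarrow> a + b \<in> FreeLie"
| scale: "a \<in> FreeLie \<Longrightarrow> fscale c a \<in> FreeLie"
| br: "a \<in> FreeLie \<Longrightarrow> b \<in> FreeLie \<Longrightarrow> lie_br a b \<in> FreeLie"

text \<open>A \<otimes> A realised as (finitely supported) functions on pairs of words.\<close>
definition tensor :: "ncpoly \<Rightarrow> ncpoly \<Rightarrow> nctensor" where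
  "tensor a b = (\<lambda>(u, v). a u * b v)"

definition mulmap :: "nctensor \<Rightarrow> ncpoly" where
  "mulmap t = (\<lambda>w. \<Sum>i\<in>{0..length w}. t (take i w, drop i w))"

text \<open>L \<otimes> L as a subspace of A \<otimes> A, and the relations defining F(L).\<close>
definition LtensL :: "nctensor set" where
  "LtensL = rspan {tensor a b | a b. a \<in> FreeLie \<and> b \<in> FreeLie}"

definition FL_rel :: "nctensor set" where
  "FL_rel = rspan ({tensor a b - tensor b a | a b. a \<in> FreeLie \<and> b \<in> FreeLie}
     \<union> {tensor a (lie_br b c) - tensor (lie_br a b) c | a b c.
          a \<in> FreeLie \<and> b \<in> FreeLie \<and> c \<in> FreeLie})"

text \<open>The commutator subspace [A,A]; tr is the projection A \<rightarrow> A/[A,A].\<close>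
definition commA :: "ncpoly set" where
  "commA = rspan {lie_br p q | p q. p \<in> Aset \<and> q \<in> Aset}"

end

theory Submission
  imports Defs
begin

text \<open>For a word \<open>w\<close> of length \<open>n \<ge> 2\<close> put \<open>\<rho>(w) = (1 / (n (n - 1))) \<Sum> c \<otimes> [v]\<close>, the sum
  running over the rotations \<open>c v\<close> of \<open>w\<close> (\<open>c\<close> a letter), where \<open>[v]\<close> is the right-normed
  bracketing, and extend \<open>\<rho>\<close> linearly to \<open>A\<close>. As \<open>\<rho>(w)\<close> depends on \<open>w\<close> only up to rotation,
  \<open>\<rho>\<close> vanishes on \<open>[A, A]\<close>. On the other hand \<open>\<rho>(a b) \<equiv> a \<otimes> b\<close> modulo the relations of \<open>F(L)\<close>
  for \<open>a, b \<in> L\<close>. Cyclicity of \<open>\<rho>\<close> and the relations reduce this to a generator \<open>a = c\<close>. There,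
  moving brackets across the tensor sign turns the rotations of \<open>c v\<close> into
  \<open>c \<otimes> ([v] + [v]\<^sub>l + \<Sum> [[v'], [v'']\<^sub>l])\<close>, summed over the proper splittings \<open>v = v' v''\<close>, with
  \<open>[-]\<^sub>l\<close> the left-normed bracketing; identities of Dynkin-Specht-Wever type show that, applied
  linearly to \<open>b\<close> homogeneous of degree \<open>n\<close>, this bracket sum gives \<open>(n + n + (n\<^sup>2 - n)) b\<close>.
  Hence \<open>t \<equiv> \<rho>(m(t)) = 0\<close> whenever \<open>m(t) \<in> [A, A]\<close>.\<close>

subsection \<open>Finitely supported functions and linear extension\<close>

lemma sum_fun_apply: "(\<Sum>i\<in>S. f i) z = (\<Sum>i\<in>S. f i z)"
  by (induct S rule: infinite_finite_induct) auto

lemma fscale_apply: "fscale c f z = c * f z"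
  by (simp add: fscale_def)

lemma module_fscale: "module (fscale :: real \<Rightarrow> ('a \<Rightarrow> real) \<Rightarrow> 'a \<Rightarrow> real)"
  by unfold_locales (auto simp: fscale_def fun_eq_iff algebra_simps)

interpretation fun_module: module "fscale :: real \<Rightarrow> ('a \<Rightarrow> real) \<Rightarrow> 'a \<Rightarrow> real"
  by (rule module_fscale)

interpretation fun_module_pair: module_pair
  "fscale :: real \<Rightarrow> ('a \<Rightarrow> real) \<Rightarrow> 'a \<Rightarrow> real" "fscale :: real \<Rightarrow> ('b \<Rightarrow> real) \<Rightarrow> 'b \<Rightarrow> real"
  by unfold_locales

abbreviation linear_fun :: "(('a \<Rightarrow> real) \<Rightarrow> 'b \<Rightarrow> real) \<Rightarrow> bool" where
  "linear_fun T \<equiv> module_hom fscale fscale T"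

lemma linear_funI:
  assumes "\<And>x y. T (x + y) = T x + T y" and "\<And>c x. T (fscale c x) = fscale c (T x)"
  shows "linear_fun T"
  using assms by (simp add: module_hom_iff module_fscale)

lemma linear_fun_compose: "linear_fun S \<Longrightarrow> linear_fun T \<Longrightarrow> linear_fun (\<lambda>x. S (T x))"
  using module_hom_compose[of fscale fscale T fscale S] by (simp add: comp_def)

definition supp :: "('a \<Rightarrow> real) \<Rightarrow> 'a set" where
  "supp p = {w. p w \<noteq> 0}"

lemma supp_zero [simp]: "supp 0 = {}"
  by (simp add: supp_def)

lemma finite_supp_add: "finite (supp p) \<Longrightarrow> finite (supp q) \<Longrightarrow> finite (supp (p + q))"
  by (rule finite_subset[of _ "supp p \<union> supp q"]) (auto simp: supp_def)

lemma finite_supp_scale: "finite (supp p) \<Longrightarrow> finite (supp (fscale c p))"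
  by (rule finite_subset[of _ "supp p"]) (auto simp: supp_def fscale_apply)

lemma finite_supp_sum: "(\<And>i. i \<in> S \<Longrightarrow> finite (supp (g i))) \<Longrightarrow> finite (supp (\<Sum>i\<in>S. g i))"
  by (induct S rule: infinite_finite_induct) (simp_all add: finite_supp_add)

lemma Aset_iff_finite_supp: "p \<in> Aset \<longleftrightarrow> finite (supp p)"
  by (simp add: Aset_def supp_def)

lemma subspace_Aset: "fun_module.subspace Aset"
  unfolding fun_module.subspace_def by (simp add: Aset_iff_finite_supp finite_supp_add finite_supp_scale)

lemma Aset_zero: "0 \<in> Aset"
  by (rule fun_module.subspace_0[OF subspace_Aset])

lemma Aset_add [intro]: "p \<in> Aset \<Longrightarrow> q \<in> Aset \<Longrightarrow> p + q \<in> Aset"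
  by (rule fun_module.subspace_add[OF subspace_Aset])

lemma Aset_diff [intro]: "p \<in> Aset \<Longrightarrow> q \<in> Aset \<Longrightarrow> p - q \<in> Aset"
  by (rule fun_module.subspace_diff[OF subspace_Aset])

lemma Aset_scale [intro]: "p \<in> Aset \<Longrightarrow> fscale c p \<in> Aset"
  by (rule fun_module.subspace_scale[OF subspace_Aset])

lemma Aset_sum [intro]: "(\<And>i. i \<in> S \<Longrightarrow> f i \<in> Aset) \<Longrightarrow> sum f S \<in> Aset"
  by (rule fun_module.subspace_sum[OF subspace_Aset])

definition monomial :: "'a \<Rightarrow> 'a \<Rightarrow> real" where
  "monomial w = (\<lambda>z. if z = w then 1 else 0)"

lemma supp_monomial [simp]: "supp (monomial w) = {w}"
  by (auto simp: supp_def monomial_def)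

lemma Aset_monomial [simp, intro]: "monomial w \<in> Aset"
  by (simp add: Aset_iff_finite_supp)

lemma gen_eq_monomial: "gen b = monomial [b]"
  by (simp add: gen_def monomial_def)

lemma Aset_gen [simp, intro]: "gen b \<in> Aset"
  by (simp add: gen_eq_monomial)

text \<open>\<open>lin_ext f\<close> is linear only on finitely supported arguments: a sum over an infinite
  support is \<open>0\<close>.\<close>

definition lin_ext :: "('a \<Rightarrow> 'b \<Rightarrow> real) \<Rightarrow> ('a \<Rightarrow> real) \<Rightarrow> 'b \<Rightarrow> real" where
  "lin_ext f p = (\<Sum>w\<in>supp p. fscale (p w) (f w))"

lemma lin_ext_apply: "lin_ext f p z = (\<Sum>w\<in>supp p. p w * f w z)"
  by (simp add: lin_ext_def sum_fun_apply fscale_apply)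

lemma lin_ext_superset:
  assumes "finite S" "supp p \<subseteq> S"
  shows "lin_ext f p = (\<Sum>w\<in>S. fscale (p w) (f w))"
  unfolding lin_ext_def
  by (rule sum.mono_neutral_left) (use assms in \<open>auto simp: supp_def fscale_def fun_eq_iff\<close>)

lemma lin_ext_add:
  assumes "finite (supp p)" "finite (supp q)"
  shows "lin_ext f (p + q) = lin_ext f p + lin_ext f q"
proof -
  let ?S = "supp p \<union> supp q"
  have S: "finite ?S" using assms by simp
  have "lin_ext f (p + q) = (\<Sum>w\<in>?S. fscale ((p + q) w) (f w))"
    by (rule lin_ext_superset[OF S]) (auto simp: supp_def)
  also have "\<dots> = (\<Sum>w\<in>?S. fscale (p w) (f w)) + (\<Sum>w\<in>?S. fscale (q w) (f w))"
    by (simp add: sum.distrib[symmetric] fun_eq_iff algebra_simps)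
  also have "\<dots> = lin_ext f p + lin_ext f q"
    using lin_ext_superset[OF S, of p f] lin_ext_superset[OF S, of q f] by auto
  finally show ?thesis .
qed

lemma lin_ext_scale: "lin_ext f (fscale c p) = fscale c (lin_ext f p)"
proof (cases "c = 0")
  case True
  then show ?thesis by (simp add: lin_ext_def supp_def fun_eq_iff)
next
  case False
  then have "supp (fscale c p) = supp p" by (auto simp: supp_def fscale_apply)
  then show ?thesis by (simp add: lin_ext_apply fun_eq_iff sum_distrib_left algebra_simps fscale_apply)
qed

lemma lin_ext_diff:
  assumes "finite (supp p)" "finite (supp q)"
  shows "lin_ext f (p - q) = lin_ext f p - lin_ext f q"
proof -
  have "p - q = p + fscale (-1) q" by (simp add: fun_eq_iff)
  then have "lin_ext f (p - q) = lin_ext f p + fscale (-1) (lin_ext f q)"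
    by (simp only: lin_ext_add[OF assms(1) finite_supp_scale[OF assms(2)]] lin_ext_scale)
  then show ?thesis by (simp add: fun_eq_iff)
qed

lemma lin_ext_zero [simp]: "lin_ext f 0 = 0"
  by (simp add: lin_ext_def)

lemma lin_ext_monomial [simp]: "lin_ext f (monomial w) = f w"
  unfolding lin_ext_def supp_monomial by (simp add: monomial_def fun_eq_iff)

lemma lin_ext_gen [simp]: "lin_ext f (gen b) = f [b]"
  by (simp add: gen_eq_monomial)

lemma lin_ext_cong: "(\<And>w. w \<in> supp p \<Longrightarrow> f w = g w) \<Longrightarrow> lin_ext f p = lin_ext g p"
  unfolding lin_ext_def by (rule sum.cong) auto

lemma lin_ext_fun_add: "lin_ext (\<lambda>w. f w + g w) p = lin_ext f p + lin_ext g p"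
  by (simp add: lin_ext_apply fun_eq_iff sum.distrib algebra_simps)

lemma lin_ext_fun_diff: "lin_ext (\<lambda>w. f w - g w) p = lin_ext f p - lin_ext g p"
  by (simp add: lin_ext_apply fun_eq_iff sum_subtractf algebra_simps)

lemma lin_ext_fun_sum: "lin_ext (\<lambda>w. \<Sum>j\<in>J. g j w) p = (\<Sum>j\<in>J. lin_ext (g j) p)"
  by (simp add: lin_ext_apply fun_eq_iff sum_fun_apply sum_distrib_left sum.swap[of _ J])

lemma lin_ext_swap:
  "lin_ext (\<lambda>u. lin_ext (\<lambda>v. G u v) q) p = lin_ext (\<lambda>v. lin_ext (\<lambda>u. G u v) p) q"
proof (rule ext)
  fix z
  have "lin_ext (\<lambda>u. lin_ext (\<lambda>v. G u v) q) p z
      = (\<Sum>u\<in>supp p. \<Sum>v\<in>supp q. p u * (q v * G u v z))"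
    by (simp add: lin_ext_apply sum_distrib_left)
  also have "\<dots> = (\<Sum>v\<in>supp q. \<Sum>u\<in>supp p. q v * (p u * G u v z))"
    by (subst sum.swap) (simp add: algebra_simps)
  also have "\<dots> = lin_ext (\<lambda>v. lin_ext (\<lambda>u. G u v) p) q z"
    by (simp add: lin_ext_apply sum_distrib_left)
  finally show "lin_ext (\<lambda>u. lin_ext (\<lambda>v. G u v) q) p z = lin_ext (\<lambda>v. lin_ext (\<lambda>u. G u v) p) q z" .
qed

lemma linear_fun_lin_ext: "linear_fun T \<Longrightarrow> T (lin_ext f p) = lin_ext (\<lambda>w. T (f w)) p"
  unfolding lin_ext_def by (simp add: module_hom.sum module_hom.scale)

lemma lin_ext_sum:
  "(\<And>i. i \<in> S \<Longrightarrow> finite (supp (g i))) \<Longrightarrow> lin_ext f (\<Sum>i\<in>S. g i) = (\<Sum>i\<in>S. lin_ext f (g i))"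
  by (induct S rule: infinite_finite_induct) (simp_all add: lin_ext_add finite_supp_sum)

lemma lin_ext_lin_ext:
  assumes "\<And>w. w \<in> supp p \<Longrightarrow> finite (supp (g w))"
  shows "lin_ext f (lin_ext g p) = lin_ext (\<lambda>w. lin_ext f (g w)) p"
  unfolding lin_ext_def[of g]
  by (subst lin_ext_sum) (simp_all add: assms finite_supp_scale lin_ext_scale lin_ext_def[of _ p])

lemma Aset_lin_ext [intro]: "(\<And>w. w \<in> supp p \<Longrightarrow> f w \<in> Aset) \<Longrightarrow> lin_ext f p \<in> Aset"
  unfolding lin_ext_def by (intro Aset_sum Aset_scale) auto

lemma finite_supp_Aset: "p \<in> Aset \<Longrightarrow> finite (supp p)"
  by (simp add: Aset_iff_finite_supp)

lemma finite_supp_lin_ext: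
  "(\<And>w. w \<in> supp p \<Longrightarrow> f w \<in> Aset) \<Longrightarrow> finite (supp (lin_ext f p))"
  using Aset_lin_ext Aset_iff_finite_supp by blast

subsection \<open>The free associative algebra\<close>

lemma lin_ext_monomial_append_apply:
  assumes q: "finite (supp q)"
  shows "lin_ext (\<lambda>v. monomial (u @ v)) q z
    = (if take (length u) z = u then q (drop (length u) z) else 0)"
proof -
  have "lin_ext (\<lambda>v. monomial (u @ v)) q z = (\<Sum>v\<in>supp q.
      if v = drop (length u) z then (if take (length u) z = u then q v else 0) else 0)"
    unfolding lin_ext_apply
    by (rule sum.cong) (auto simp: monomial_def append_eq_conv_conj, metis append_take_drop_id)
  also have "\<dots> = (if take (length u) z = u then q (drop (length u) z) else 0)"
    using q by (simp add: supp_def)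
  finally show ?thesis .
qed

lemma ncmul_eq_lin_ext:
  assumes p: "p \<in> Aset" and q: "q \<in> Aset"
  shows "ncmul p q = lin_ext (\<lambda>u. lin_ext (\<lambda>v. monomial (u @ v)) q) p"
proof (rule ext)
  fix z
  let ?term = "\<lambda>u. if take (length u) z = u then p u * q (drop (length u) z) else 0"
  have p_eq: "p x = (\<Sum>u\<in>supp p. if u = x then p u else 0)" for x
    using p by (simp add: Aset_iff_finite_supp) (auto simp: supp_def)
  have "ncmul p q z = (\<Sum>i\<in>{0..length z}. \<Sum>u\<in>supp p. if u = take i z then p u * q (drop i z) else 0)"
    unfolding ncmul_def p_eq[of "take _ z"] sum_distrib_right by (intro sum.cong refl) auto
  also have "\<dots> = (\<Sum>u\<in>supp p. \<Sum>i\<in>{0..length z}. if u = take i z then p u * q (drop i z) else 0)"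
    by (rule sum.swap)
  also have "\<dots> = (\<Sum>u\<in>supp p. ?term u)"
  proof (rule sum.cong[OF refl])
    fix u
    have "(\<Sum>i\<in>{0..length z}. if u = take i z then p u * q (drop i z) else 0)
        = (\<Sum>i\<in>{0..length z}. if i = length u then ?term u else 0)"
      by (rule sum.cong) auto
    then show "(\<Sum>i\<in>{0..length z}. if u = take i z then p u * q (drop i z) else 0) = ?term u"
      by (auto simp: sum.delta)
  qed
  also have "\<dots> = lin_ext (\<lambda>u. lin_ext (\<lambda>v. monomial (u @ v)) q) p z"
    unfolding lin_ext_apply[of _ p] using q
    by (simp add: lin_ext_monomial_append_apply Aset_iff_finite_supp if_distrib cong: if_cong)
  finally show "ncmul p q z = lin_ext (\<lambda>u. lin_ext (\<lambda>v. monomial (u @ v)) q) p z" .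
qed

lemma Aset_ncmul [intro]: "p \<in> Aset \<Longrightarrow> q \<in> Aset \<Longrightarrow> ncmul p q \<in> Aset"
  by (simp add: ncmul_eq_lin_ext Aset_lin_ext)

lemma lin_ext_ncmul:
  assumes "p \<in> Aset" "q \<in> Aset"
  shows "lin_ext f (ncmul p q) = lin_ext (\<lambda>u. lin_ext (\<lambda>v. f (u @ v)) q) p"
  using assms by (simp add: ncmul_eq_lin_ext lin_ext_lin_ext finite_supp_lin_ext Aset_iff_finite_supp)

lemma ncmul_monomial_left: "q \<in> Aset \<Longrightarrow> ncmul (monomial x) q = lin_ext (\<lambda>v. monomial (x @ v)) q"
  by (simp add: ncmul_eq_lin_ext)

lemma ncmul_monomial_right: "p \<in> Aset \<Longrightarrow> ncmul p (monomial y) = lin_ext (\<lambda>u. monomial (u @ y)) p"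
  by (simp add: ncmul_eq_lin_ext)

lemma linear_ncmul_left: "linear_fun (\<lambda>x. ncmul x y)"
  by (rule linear_funI)
    (simp_all add: ncmul_def fun_eq_iff sum.distrib sum_distrib_left algebra_simps fscale_apply)

lemma linear_ncmul_right: "linear_fun (ncmul x)"
  by (rule linear_funI)
    (simp_all add: ncmul_def fun_eq_iff sum.distrib sum_distrib_left algebra_simps fscale_apply)

lemma ncmul_assoc:
  assumes a: "a \<in> Aset" and b: "b \<in> Aset" and c: "c \<in> Aset"
  shows "ncmul (ncmul a b) c = ncmul a (ncmul b c)"
proof -
  have "ncmul (ncmul a b) c = lin_ext (\<lambda>u. lin_ext (\<lambda>v. ncmul (monomial (u @ v)) c) b) a"
    by (simp add: ncmul_eq_lin_ext[OF a b] linear_fun_lin_ext[OF linear_ncmul_left])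
  also have "\<dots> = lin_ext (\<lambda>u. lin_ext (\<lambda>v. lin_ext (\<lambda>w. monomial (u @ v @ w)) c) b) a"
    using c by (simp add: ncmul_monomial_left)
  also have "\<dots> = lin_ext (\<lambda>v. lin_ext (\<lambda>u. lin_ext (\<lambda>w. monomial (u @ v @ w)) c) a) b"
    by (rule lin_ext_swap)
  also have "\<dots> = lin_ext (\<lambda>v. lin_ext (\<lambda>w. lin_ext (\<lambda>u. monomial (u @ v @ w)) a) c) b"
    by (simp add: lin_ext_swap[of _ c a])
  also have "\<dots> = ncmul a (ncmul b c)"
    using a by (simp add: ncmul_eq_lin_ext[OF b c] linear_fun_lin_ext[OF linear_ncmul_right]
        ncmul_monomial_right)
  finally show ?thesis .
qed

lemma linear_lie_br_left: "linear_fun (\<lambda>x. lie_br x y)"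
  unfolding lie_br_def
  by (intro fun_module_pair.module_hom_sub linear_ncmul_left linear_ncmul_right)

lemma linear_lie_br_right: "linear_fun (lie_br x)"
  unfolding lie_br_def
  by (intro fun_module_pair.module_hom_sub linear_ncmul_left linear_ncmul_right)

lemma Aset_lie_br [intro]: "p \<in> Aset \<Longrightarrow> q \<in> Aset \<Longrightarrow> lie_br p q \<in> Aset"
  by (simp add: lie_br_def Aset_diff Aset_ncmul)

lemma lin_ext_lie_br:
  assumes "p \<in> Aset" "q \<in> Aset"
  shows "lin_ext f (lie_br p q)
    = lin_ext (\<lambda>u. lin_ext (\<lambda>v. f (u @ v)) q) p - lin_ext (\<lambda>u. lin_ext (\<lambda>v. f (u @ v)) p) q"
  using assms by (simp add: lie_br_def lin_ext_diff finite_supp_Aset Aset_ncmul lin_ext_ncmul)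

lemma lie_br_antisym: "lie_br a b = - lie_br b a"
  by (simp add: lie_br_def)

lemma jacobi:
  assumes X: "X \<in> Aset" and Y: "Y \<in> Aset" and Z: "Z \<in> Aset"
  shows "lie_br X (lie_br Y Z) = lie_br (lie_br X Y) Z + lie_br Y (lie_br X Z)"
proof -
  note L = module_hom.diff[OF linear_ncmul_left] and R = module_hom.diff[OF linear_ncmul_right]
  show ?thesis by (simp add: lie_br_def L R ncmul_assoc X Y Z algebra_simps)
qed

lemma jacobi_ad_commutator:
  assumes "a \<in> Aset" "b \<in> Aset" "X \<in> Aset"
  shows "lie_br a (lie_br b X) - lie_br b (lie_br a X) = lie_br (lie_br a b) X"
  using jacobi[OF assms] by (simp add: algebra_simps)

lemma jacobi_right_commutator:
  assumes "X \<in> Aset" "a \<in> Aset" "b \<in> Aset"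
  shows "lie_br (lie_br X a) b - lie_br (lie_br X b) a = lie_br X (lie_br a b)"
  using jacobi[OF assms] lie_br_antisym[of "lie_br X b" a] by (simp add: algebra_simps)

lemma jacobi_left:
  assumes "X \<in> Aset" "Y \<in> Aset" "Z \<in> Aset"
  shows "lie_br X (lie_br Y Z) - lie_br (lie_br Z X) Y = lie_br (lie_br X Y) Z"
  using jacobi[OF assms] lie_br_antisym[of "lie_br Z X" Y] lie_br_antisym[of Z X]
    module_hom.neg[OF linear_lie_br_right, of Y "lie_br X Z"]
  by (simp add: algebra_simps)

lemma jacobi_right:
  assumes "X \<in> Aset" "Y \<in> Aset" "Z \<in> Aset"
  shows "lie_br (lie_br Z X) Y - lie_br X (lie_br Y Z) = lie_br Z (lie_br X Y)"
  using jacobi_left[OF assms] lie_br_antisym[of Z "lie_br X Y"] by (simp add: algebra_simps)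

definition euler :: "ncpoly \<Rightarrow> ncpoly" where
  "euler p = (\<lambda>w. real (length w) * p w)"

lemma linear_euler: "linear_fun euler"
  by (rule linear_funI) (simp_all add: euler_def fun_eq_iff algebra_simps fscale_apply)

lemma Aset_euler [intro]: "p \<in> Aset \<Longrightarrow> euler p \<in> Aset"
  unfolding Aset_iff_finite_supp by (rule finite_subset[of _ "supp p"]) (auto simp: supp_def euler_def)

lemma euler_gen [simp]: "euler (gen b) = gen b"
  by (simp add: euler_def gen_def fun_eq_iff)

lemma euler_ncmul: "euler (ncmul p q) = ncmul (euler p) q + ncmul p (euler q)"
proof (rule ext)
  fix z
  have "euler (ncmul p q) z = (\<Sum>i\<in>{0..length z}. real (length z) * (p (take i z) * q (drop i z)))"
    by (simp add: euler_def ncmul_def sum_distrib_left)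
  also have "\<dots> = (\<Sum>i\<in>{0..length z}. real (length (take i z)) * p (take i z) * q (drop i z)
      + p (take i z) * (real (length (drop i z)) * q (drop i z)))"
    by (rule sum.cong) (auto simp: algebra_simps min_def)
  also have "\<dots> = (ncmul (euler p) q + ncmul p (euler q)) z"
    by (simp add: euler_def ncmul_def sum.distrib)
  finally show "euler (ncmul p q) z = (ncmul (euler p) q + ncmul p (euler q)) z" .
qed

lemma euler_lie_br: "euler (lie_br p q) = lie_br (euler p) q + lie_br p (euler q)"
  by (simp add: lie_br_def euler_ncmul module_hom.diff[OF linear_euler])

lemma subspace_FreeLie: "fun_module.subspace FreeLie"
proof -
  have "fscale 0 (gen True) = 0" by (simp add: fun_eq_iff)
  then have "0 \<in> FreeLie" using FreeLie.scale[OF FreeLie.gen] by metis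
  then show ?thesis by (simp add: fun_module.subspace_def FreeLie.add FreeLie.scale)
qed

lemma FreeLie_zero: "0 \<in> FreeLie"
  by (rule fun_module.subspace_0[OF subspace_FreeLie])

lemma FreeLie_Aset: "a \<in> FreeLie \<Longrightarrow> a \<in> Aset"
  by (induct rule: FreeLie.induct) (blast intro: Aset_add Aset_scale Aset_lie_br)+

lemma FreeLie_Nil: "a \<in> FreeLie \<Longrightarrow> a [] = 0"
  by (induct rule: FreeLie.induct) (auto simp: gen_def lie_br_def ncmul_def fscale_apply)

lemma finite_supp_FreeLie: "a \<in> FreeLie \<Longrightarrow> finite (supp a)"
  using FreeLie_Aset Aset_iff_finite_supp by blast

lemma Nil_notin_supp_FreeLie: "a \<in> FreeLie \<Longrightarrow> w \<in> supp a \<Longrightarrow> w \<noteq> []"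
  using FreeLie_Nil by (auto simp: supp_def)

subsection \<open>Tensors and the relations of \<open>F(L)\<close>\<close>

lemma linear_tensor_left: "linear_fun (\<lambda>a. tensor a b)"
  by (rule linear_funI) (simp_all add: tensor_def fun_eq_iff algebra_simps fscale_apply)

lemma linear_tensor_right: "linear_fun (tensor a)"
  by (rule linear_funI) (simp_all add: tensor_def fun_eq_iff algebra_simps fscale_apply)

lemma mulmap_tensor: "mulmap (tensor a b) = ncmul a b"
  by (simp add: mulmap_def tensor_def ncmul_def)

lemma linear_mulmap: "linear_fun mulmap"
  by (rule linear_funI) (simp_all add: mulmap_def fun_eq_iff sum.distrib sum_distrib_left fscale_apply)

abbreviation FL_equiv :: "nctensor \<Rightarrow> nctensor \<Rightarrow> bool" where
  "FL_equiv x y \<equiv> x - y \<in> FL_rel"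

lemma subspace_FL_rel: "fun_module.subspace FL_rel"
  by (simp add: FL_rel_def)

lemma FL_equiv_refl: "FL_equiv x x"
  by (simp add: fun_module.subspace_0[OF subspace_FL_rel])

lemma FL_equiv_sym: "FL_equiv x y \<Longrightarrow> FL_equiv y x"
  using fun_module.subspace_neg[OF subspace_FL_rel, of "x - y"] by simp

lemma FL_equiv_trans: "FL_equiv x y \<Longrightarrow> FL_equiv y z \<Longrightarrow> FL_equiv x z"
  using fun_module.subspace_add[OF subspace_FL_rel, of "x - y" "y - z"] by simp

lemma FL_equiv_add: "FL_equiv x y \<Longrightarrow> FL_equiv x' y' \<Longrightarrow> FL_equiv (x + x') (y + y')"
  using fun_module.subspace_add[OF subspace_FL_rel, of "x - y" "x' - y'"] by (simp add: algebra_simps)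

lemma FL_equiv_scale: "FL_equiv x y \<Longrightarrow> FL_equiv (fscale c x) (fscale c y)"
  using fun_module.subspace_scale[OF subspace_FL_rel, of "x - y" c]
  by (simp add: fun_module.scale_right_diff_distrib)

lemma FL_equiv_sum: "(\<And>i. i \<in> S \<Longrightarrow> FL_equiv (f i) (g i)) \<Longrightarrow> FL_equiv (sum f S) (sum g S)"
  using fun_module.subspace_sum[OF subspace_FL_rel, of S "\<lambda>i. f i - g i"] by (simp add: sum_subtractf)

lemma FL_equiv_lin_ext:
  "(\<And>w. w \<in> supp p \<Longrightarrow> FL_equiv (f w) (g w)) \<Longrightarrow> FL_equiv (lin_ext f p) (lin_ext g p)"
  unfolding lin_ext_def by (rule FL_equiv_sum) (auto intro: FL_equiv_scale)

lemma FL_equiv_tensor_swap: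
  "a \<in> FreeLie \<Longrightarrow> b \<in> FreeLie \<Longrightarrow> FL_equiv (tensor a b) (tensor b a)"
  unfolding FL_rel_def by (rule fun_module.span_base) blast

lemma FL_equiv_tensor_lie_br:
  "a \<in> FreeLie \<Longrightarrow> b \<in> FreeLie \<Longrightarrow> c \<in> FreeLie \<Longrightarrow>
    FL_equiv (tensor a (lie_br b c)) (tensor (lie_br a b) c)"
  unfolding FL_rel_def by (rule fun_module.span_base) blast

subsection \<open>Bracketings of words\<close>

text \<open>The bracket identities below are proved at the level of functions, so the pointwise
  evaluation rules for sums and differences are switched off.\<close>

declare plus_fun_apply [simp del] minus_apply [simp del] uminus_apply [simp del]

primrec ad_left :: "bool list \<Rightarrow> ncpoly \<Rightarrow> ncpoly" where
  "ad_left [] X = X"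
| "ad_left (c # u) X = lie_br (gen c) (ad_left u X)"

primrec ad_right :: "bool list \<Rightarrow> ncpoly \<Rightarrow> ncpoly" where
  "ad_right [] X = X"
| "ad_right (d # v) X = ad_right v (lie_br X (gen d))"

lemma ad_left_append: "ad_left (u @ v) X = ad_left u (ad_left v X)"
  by (induct u) simp_all

lemma ad_right_append: "ad_right (u @ v) X = ad_right v (ad_right u X)"
  by (induct u arbitrary: X) simp_all

lemma linear_ad_left: "linear_fun (ad_left u)"
proof (induct u)
  case Nil
  then show ?case using fun_module.module_hom_ident by simp
next
  case (Cons c u)
  then show ?case using linear_fun_compose[OF linear_lie_br_right] by simp
qed

lemma ad_left_FreeLie: "X \<in> FreeLie \<Longrightarrow> ad_left u X \<in> FreeLie"
  by (induct u) (auto intro: FreeLie.br FreeLie.gen)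

lemma ad_right_FreeLie: "X \<in> FreeLie \<Longrightarrow> ad_right v X \<in> FreeLie"
  by (induct v arbitrary: X) (auto intro: FreeLie.br FreeLie.gen)

lemma ad_right_Aset: "X \<in> Aset \<Longrightarrow> ad_right v X \<in> Aset"
  by (induct v arbitrary: X) auto

primrec rbracket :: "bool list \<Rightarrow> ncpoly" where
  "rbracket [] = 0"
| "rbracket (c # v) = (if v = [] then gen c else lie_br (gen c) (rbracket v))"

primrec lbracket :: "bool list \<Rightarrow> ncpoly" where
  "lbracket [] = 0"
| "lbracket (c # u) = ad_right u (gen c)"

lemma rbracket_append: "v \<noteq> [] \<Longrightarrow> rbracket (u @ v) = ad_left u (rbracket v)"
  by (induct u) auto

lemma lbracket_append: "u \<noteq> [] \<Longrightarrow> lbracket (u @ v) = ad_right v (lbracket u)"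
  by (cases u) (auto simp: ad_right_append)

lemma rbracket_FreeLie [intro]: "rbracket w \<in> FreeLie"
  by (induct w)
    (auto simp only: rbracket.simps split: if_split intro: FreeLie_zero FreeLie.br FreeLie.gen)

lemma lbracket_FreeLie [intro]: "lbracket w \<in> FreeLie"
  by (cases w) (simp_all only: lbracket.simps FreeLie_zero ad_right_FreeLie FreeLie.gen)

lemma rbracket_Aset [intro]: "rbracket w \<in> Aset"
  by (simp add: FreeLie_Aset rbracket_FreeLie)

lemma lbracket_Aset [intro]: "lbracket w \<in> Aset"
  by (simp add: FreeLie_Aset lbracket_FreeLie)

lemma lin_ext_ad_left:
  assumes "a \<in> FreeLie" "X \<in> Aset"
  shows "lin_ext (\<lambda>u. ad_left u X) a = lie_br a X"
  using assms
proof (induct a arbitrary: X rule: FreeLie.induct)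
  case (add a b)
  then show ?case by (simp add: lin_ext_add finite_supp_FreeLie module_hom.add[OF linear_lie_br_left])
next
  case (scale a c)
  then show ?case by (simp add: lin_ext_scale module_hom.scale[OF linear_lie_br_left])
next
  case (br a b)
  have nested: "lin_ext (\<lambda>u. lin_ext (\<lambda>v. ad_left (u @ v) X) q) p = lie_br p (lie_br q X)"
    if "q \<in> Aset"
      and IHp: "\<And>Y. Y \<in> Aset \<Longrightarrow> lin_ext (\<lambda>u. ad_left u Y) p = lie_br p Y"
      and IHq: "\<And>Y. Y \<in> Aset \<Longrightarrow> lin_ext (\<lambda>u. ad_left u Y) q = lie_br q Y" for p q
  proof -
    have "lin_ext (\<lambda>u. lin_ext (\<lambda>v. ad_left (u @ v) X) q) p
        = lin_ext (\<lambda>u. ad_left u (lin_ext (\<lambda>v. ad_left v X) q)) p"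
      by (simp add: ad_left_append linear_fun_lin_ext[OF linear_ad_left])
    then show ?thesis using IHq[OF br.prems] IHp br.prems \<open>q \<in> Aset\<close> by auto
  qed
  have "a \<in> Aset" "b \<in> Aset" using br.hyps FreeLie_Aset by auto
  then have "lin_ext (\<lambda>u. ad_left u X) (lie_br a b) = lie_br a (lie_br b X) - lie_br b (lie_br a X)"
    using br.hyps by (simp add: lin_ext_lie_br nested)
  also have "\<dots> = lie_br (lie_br a b) X"
    using \<open>a \<in> Aset\<close> \<open>b \<in> Aset\<close> br.prems by (rule jacobi_ad_commutator)
  finally show ?case .
qed simp

lemma lin_ext_ad_right:
  assumes "b \<in> FreeLie" "X \<in> Aset"
  shows "lin_ext (\<lambda>v. ad_right v X) b = lie_br X b"
  using assms
proof (induct b arbitrary: X rule: FreeLie.induct)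
  case (add a b)
  then show ?case by (simp add: lin_ext_add finite_supp_FreeLie module_hom.add[OF linear_lie_br_right])
next
  case (scale a c)
  then show ?case by (simp add: lin_ext_scale module_hom.scale[OF linear_lie_br_right])
next
  case (br a b)
  have nested: "lin_ext (\<lambda>u. lin_ext (\<lambda>v. ad_right (u @ v) X) q) p = lie_br (lie_br X p) q"
    if IHp: "\<And>Y. Y \<in> Aset \<Longrightarrow> lin_ext (\<lambda>u. ad_right u Y) p = lie_br Y p"
      and IHq: "\<And>Y. Y \<in> Aset \<Longrightarrow> lin_ext (\<lambda>u. ad_right u Y) q = lie_br Y q" for p q
  proof -
    have "lin_ext (\<lambda>u. lin_ext (\<lambda>v. ad_right (u @ v) X) q) p = lin_ext (\<lambda>u. lie_br (ad_right u X) q) p"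
      using IHq ad_right_Aset[OF br.prems] by (simp add: ad_right_append)
    also have "\<dots> = lie_br (lin_ext (\<lambda>u. ad_right u X) p) q"
      by (simp add: linear_fun_lin_ext[OF linear_lie_br_left])
    also have "\<dots> = lie_br (lie_br X p) q"
      using IHp[OF br.prems] by simp
    finally show ?thesis .
  qed
  have "a \<in> Aset" "b \<in> Aset" using br.hyps FreeLie_Aset by auto
  then have "lin_ext (\<lambda>v. ad_right v X) (lie_br a b) = lie_br (lie_br X a) b - lie_br (lie_br X b) a"
    using br.hyps by (simp add: lin_ext_lie_br nested)
  also have "\<dots> = lie_br X (lie_br a b)"
    using br.prems \<open>a \<in> Aset\<close> \<open>b \<in> Aset\<close> by (rule jacobi_right_commutator)
  finally show ?case .
qed simp

lemma lin_ext_rbracket: "a \<in> FreeLie \<Longrightarrow> lin_ext rbracket a = euler a"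
proof (induct a rule: FreeLie.induct)
  case (add a b)
  then show ?case by (simp add: lin_ext_add finite_supp_FreeLie module_hom.add[OF linear_euler])
next
  case (scale a c)
  then show ?case by (simp add: lin_ext_scale module_hom.scale[OF linear_euler])
next
  case (br a b)
  have nested: "lin_ext (\<lambda>u. lin_ext (\<lambda>v. rbracket (u @ v)) q) p = lie_br p (euler q)"
    if "p \<in> FreeLie" "q \<in> FreeLie" "lin_ext rbracket q = euler q" for p q
  proof -
    have "lin_ext (\<lambda>u. lin_ext (\<lambda>v. rbracket (u @ v)) q) p
        = lin_ext (\<lambda>u. lin_ext (\<lambda>v. ad_left u (rbracket v)) q) p"
      by (intro lin_ext_cong) (simp add: rbracket_append Nil_notin_supp_FreeLie[OF \<open>q \<in> FreeLie\<close>])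
    also have "\<dots> = lin_ext (\<lambda>u. ad_left u (euler q)) p"
      by (simp add: linear_fun_lin_ext[OF linear_ad_left, symmetric] that(3))
    also have "\<dots> = lie_br p (euler q)"
      using that by (simp add: lin_ext_ad_left Aset_euler FreeLie_Aset)
    finally show ?thesis .
  qed
  have "lin_ext rbracket (lie_br a b) = lie_br a (euler b) - lie_br b (euler a)"
    using br by (simp add: lin_ext_lie_br FreeLie_Aset nested)
  also have "\<dots> = euler (lie_br a b)"
    by (simp add: euler_lie_br lie_br_antisym[of b "euler a"])
  finally show ?case .
qed simp

lemma lin_ext_lbracket: "a \<in> FreeLie \<Longrightarrow> lin_ext lbracket a = euler a"
proof (induct a rule: FreeLie.induct)
  case (add a b)
  then show ?case by (simp add: lin_ext_add finite_supp_FreeLie module_hom.add[OF linear_euler])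
next
  case (scale a c)
  then show ?case by (simp add: lin_ext_scale module_hom.scale[OF linear_euler])
next
  case (br a b)
  have nested: "lin_ext (\<lambda>u. lin_ext (\<lambda>v. lbracket (u @ v)) q) p = lie_br (euler p) q"
    if "p \<in> FreeLie" "q \<in> FreeLie" "lin_ext lbracket p = euler p" for p q
  proof -
    have "lin_ext (\<lambda>u. lin_ext (\<lambda>v. lbracket (u @ v)) q) p
        = lin_ext (\<lambda>u. lin_ext (\<lambda>v. ad_right v (lbracket u)) q) p"
      by (intro lin_ext_cong) (simp add: lbracket_append Nil_notin_supp_FreeLie[OF \<open>p \<in> FreeLie\<close>])
    also have "\<dots> = lin_ext (\<lambda>u. lie_br (lbracket u) q) p"
      using that(2) by (intro lin_ext_cong) (simp add: lin_ext_ad_right lbracket_Aset)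
    also have "\<dots> = lie_br (euler p) q"
      by (simp add: linear_fun_lin_ext[OF linear_lie_br_left, symmetric] that(3))
    finally show ?thesis .
  qed
  have "lin_ext lbracket (lie_br a b) = lie_br (euler a) b - lie_br (euler b) a"
    using br by (simp add: lin_ext_lie_br FreeLie_Aset nested)
  also have "\<dots> = euler (lie_br a b)"
    by (simp add: euler_lie_br lie_br_antisym[of "euler b" a])
  finally show ?case .
qed simp

definition split_bracket :: "bool list \<Rightarrow> ncpoly" where
  "split_bracket v = (\<Sum>j\<in>{1..<length v}. lie_br (rbracket (take j v)) (lbracket (drop j v)))"

lemma split_bracket_append:
  assumes u: "u \<noteq> []" and v: "v \<noteq> []"
  shows "split_bracket (u @ v)
    = (\<Sum>j\<in>{1..<length u}. lie_br (rbracket (take j u)) (ad_right v (lbracket (drop j u))))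
      + lie_br (rbracket u) (lbracket v)
      + (\<Sum>j\<in>{1..<length v}. lie_br (ad_left u (rbracket (take j v))) (lbracket (drop j v)))"
proof -
  let ?f = "\<lambda>j. lie_br (rbracket (take j (u @ v))) (lbracket (drop j (u @ v)))"
  have len: "1 \<le> length u" "length u < length u + length v" using u v by (auto simp: Suc_le_eq)
  have "split_bracket (u @ v) = sum ?f {1..<length u} + sum ?f {length u..<length u + length v}"
    unfolding split_bracket_def length_append
    by (rule sum.atLeastLessThan_concat[symmetric]) (use len in auto)
  also have "sum ?f {length u..<length u + length v}
      = ?f (length u) + sum ?f {Suc (length u)..<length u + length v}"
    using len by (simp add: sum.atLeast_Suc_lessThan)
  also have "sum ?f {Suc (length u)..<length u + length v} = sum (\<lambda>i. ?f (i + length u)) {1..<length v}"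
    using sum.shift_bounds_nat_ivl[of ?f 1 "length u" "length v"] by (simp add: add.commute)
  also have "\<dots> = (\<Sum>j\<in>{1..<length v}. lie_br (ad_left u (rbracket (take j v))) (lbracket (drop j v)))"
    using v by (intro sum.cong refl) (auto simp: rbracket_append)
  also have "sum ?f {1..<length u}
      = (\<Sum>j\<in>{1..<length u}. lie_br (rbracket (take j u)) (ad_right v (lbracket (drop j u))))"
    by (intro sum.cong refl) (auto simp: lbracket_append)
  finally show ?thesis by (simp add: add.assoc)
qed

definition split_bracket_ins_right :: "ncpoly \<Rightarrow> bool list \<Rightarrow> ncpoly" where
  "split_bracket_ins_right b u
    = (\<Sum>j\<in>{1..<length u}. lie_br (rbracket (take j u)) (lie_br (lbracket (drop j u)) b))"

definition split_bracket_ins_left :: "ncpoly \<Rightarrow> bool list \<Rightarrow> ncpoly" where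
  "split_bracket_ins_left a v
    = (\<Sum>j\<in>{1..<length v}. lie_br (lie_br a (rbracket (take j v))) (lbracket (drop j v)))"

lemma lin_ext_split_bracket_ncmul:
  assumes a: "a \<in> FreeLie" and b: "b \<in> FreeLie"
  shows "lin_ext split_bracket (ncmul a b)
    = lin_ext (split_bracket_ins_right b) a + lie_br (euler a) (euler b)
      + lin_ext (split_bracket_ins_left a) b"
proof -
  let ?T1 = "\<lambda>u v. \<Sum>j\<in>{1..<length u}. lie_br (rbracket (take j u)) (ad_right v (lbracket (drop j u)))"
  let ?T2 = "\<lambda>u v. lie_br (rbracket u) (lbracket v)"
  let ?T3 = "\<lambda>u v. \<Sum>j\<in>{1..<length v}. lie_br (ad_left u (rbracket (take j v))) (lbracket (drop j v))"
  have "lin_ext split_bracket (ncmul a b) = lin_ext (\<lambda>u. lin_ext (\<lambda>v. split_bracket (u @ v)) b) a"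
    using a b by (simp add: lin_ext_ncmul FreeLie_Aset)
  also have "\<dots> = lin_ext (\<lambda>u. lin_ext (\<lambda>v. ?T1 u v + ?T2 u v + ?T3 u v) b) a"
    by (intro lin_ext_cong)
      (simp add: split_bracket_append Nil_notin_supp_FreeLie[OF a] Nil_notin_supp_FreeLie[OF b])
  also have "\<dots> = lin_ext (\<lambda>u. lin_ext (?T1 u) b) a + lin_ext (\<lambda>u. lin_ext (?T2 u) b) a
      + lin_ext (\<lambda>u. lin_ext (?T3 u) b) a"
    by (simp add: lin_ext_fun_add)
  also have "lin_ext (\<lambda>u. lin_ext (?T3 u) b) a = lin_ext (\<lambda>v. lin_ext (\<lambda>u. ?T3 u v) a) b"
    by (rule lin_ext_swap)
  also have "lin_ext (\<lambda>u. lin_ext (?T1 u) b) a = lin_ext (split_bracket_ins_right b) a"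
    using b by (simp add: split_bracket_ins_right_def[abs_def] lin_ext_fun_sum
        linear_fun_lin_ext[OF linear_lie_br_right, symmetric]
        lin_ext_ad_right lbracket_Aset)
  also have "lin_ext (\<lambda>u. lin_ext (?T2 u) b) a = lie_br (lin_ext rbracket a) (lin_ext lbracket b)"
    by (simp add: linear_fun_lin_ext[OF linear_lie_br_right, symmetric]
        linear_fun_lin_ext[OF linear_lie_br_left, symmetric])
  also have "\<dots> = lie_br (euler a) (euler b)"
    using a b by (simp add: lin_ext_rbracket lin_ext_lbracket)
  also have "lin_ext (\<lambda>v. lin_ext (\<lambda>u. ?T3 u v) a) b = lin_ext (split_bracket_ins_left a) b"
    using a by (simp add: split_bracket_ins_left_def[abs_def] lin_ext_fun_sum
        linear_fun_lin_ext[OF linear_lie_br_left, symmetric]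
        lin_ext_ad_left rbracket_Aset)
  finally show ?thesis .
qed

lemma lie_br_split_bracket_right:
  assumes "b \<in> Aset"
  shows "lie_br (split_bracket u) b = split_bracket_ins_right b u - split_bracket_ins_left b u"
  by (simp add: split_bracket_def split_bracket_ins_right_def split_bracket_ins_left_def
      sum_subtractf[symmetric] jacobi_left[OF rbracket_Aset lbracket_Aset assms]
      module_hom.sum[OF linear_lie_br_left])

lemma lie_br_split_bracket_left:
  assumes "a \<in> Aset"
  shows "lie_br a (split_bracket v) = split_bracket_ins_left a v - split_bracket_ins_right a v"
  by (simp add: split_bracket_def split_bracket_ins_right_def split_bracket_ins_left_def
      sum_subtractf[symmetric] jacobi_right[OF rbracket_Aset lbracket_Aset assms]
      module_hom.sum[OF linear_lie_br_right])

lemma lin_ext_split_bracket: "a \<in> FreeLie \<Longrightarrow> lin_ext split_bracket a = euler (euler a) - euler a"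
proof (induct a rule: FreeLie.induct)
  case (gen b)
  then show ?case by (simp add: split_bracket_def)
next
  case (add a b)
  then show ?case by (simp add: lin_ext_add finite_supp_FreeLie module_hom.add[OF linear_euler])
next
  case (scale a c)
  then show ?case
    by (simp add: lin_ext_scale module_hom.scale[OF linear_euler] fun_module.scale_right_diff_distrib)
next
  case (br a b)
  have A: "a \<in> Aset" "b \<in> Aset" using br.hyps FreeLie_Aset by auto
  have right: "lin_ext (split_bracket_ins_right b) a - lin_ext (split_bracket_ins_left b) a
      = lie_br (lin_ext split_bracket a) b"
    by (simp add: lin_ext_fun_diff[symmetric] lie_br_split_bracket_right[OF A(2), symmetric]
        linear_fun_lin_ext[OF linear_lie_br_left])
  have left: "lin_ext (split_bracket_ins_left a) b - lin_ext (split_bracket_ins_right a) b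
      = lie_br a (lin_ext split_bracket b)"
    by (simp add: lin_ext_fun_diff[symmetric] lie_br_split_bracket_left[OF A(1), symmetric]
        linear_fun_lin_ext[OF linear_lie_br_right])
  have "lin_ext split_bracket (lie_br a b)
      = lin_ext split_bracket (ncmul a b) - lin_ext split_bracket (ncmul b a)"
    using A by (simp add: lie_br_def lin_ext_diff finite_supp_Aset Aset_ncmul)
  also have "\<dots> = (lin_ext (split_bracket_ins_right b) a - lin_ext (split_bracket_ins_left b) a)
      + (lie_br (euler a) (euler b) - lie_br (euler b) (euler a))
      + (lin_ext (split_bracket_ins_left a) b - lin_ext (split_bracket_ins_right a) b)"
    using br.hyps by (simp add: lin_ext_split_bracket_ncmul algebra_simps)
  also have "\<dots> = euler (euler (lie_br a b)) - euler (lie_br a b)"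
    unfolding right left br.hyps(2,4)
    by (simp add: euler_lie_br module_hom.add[OF linear_euler] module_hom.diff[OF linear_lie_br_left]
        module_hom.diff[OF linear_lie_br_right] lie_br_antisym[of "euler b" "euler a"] algebra_simps)
  finally show ?case .
qed

subsection \<open>The cyclic tensor\<close>

primrec head_tensor :: "bool list \<Rightarrow> nctensor" where
  "head_tensor [] = 0"
| "head_tensor (c # v) = tensor (gen c) (rbracket v)"

text \<open>For words of length below 2 the factor is \<open>1 / 0 = 0\<close>; such words never occur in a product
  of two elements of \<open>L\<close>.\<close>

definition cyc_tensor_word :: "bool list \<Rightarrow> nctensor" where
  "cyc_tensor_word w = fscale (1 / (real (length w) * (real (length w) - 1)))
     (\<Sum>k<length w. head_tensor (rotate k w))"

definition cyc_tensor :: "ncpoly \<Rightarrow> nctensor" where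
  "cyc_tensor = lin_ext cyc_tensor_word"

lemma cyc_tensor_zero: "cyc_tensor 0 = 0"
  by (simp only: cyc_tensor_def lin_ext_zero)

lemma cyc_tensor_add: "p \<in> Aset \<Longrightarrow> q \<in> Aset \<Longrightarrow> cyc_tensor (p + q) = cyc_tensor p + cyc_tensor q"
  by (simp add: cyc_tensor_def lin_ext_add finite_supp_Aset)

lemma cyc_tensor_diff: "p \<in> Aset \<Longrightarrow> q \<in> Aset \<Longrightarrow> cyc_tensor (p - q) = cyc_tensor p - cyc_tensor q"
  by (simp add: cyc_tensor_def lin_ext_diff finite_supp_Aset)

lemma cyc_tensor_scale: "cyc_tensor (fscale c p) = fscale c (cyc_tensor p)"
  by (simp add: cyc_tensor_def lin_ext_scale)

lemma sum_rotate_rotate: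
  fixes f :: "'a list \<Rightarrow> 'b::cancel_comm_monoid_add"
  shows "(\<Sum>k<length w. f (rotate k (rotate m w))) = (\<Sum>k<length w. f (rotate k w))"
proof (induct m)
  case (Suc m)
  let ?g = "\<lambda>k. f (rotate (k + m) w)"
  have "?g (length w) = ?g 0"
    by (metis add_0 mod_add_self1 rotate_conv_mod)
  then have shift: "(\<Sum>k<length w. ?g (Suc k)) = (\<Sum>k<length w. ?g k)"
    using sum.lessThan_Suc_shift[of ?g "length w"] sum.lessThan_Suc[of ?g "length w"]
    by (simp add: add.commute)
  have "(\<Sum>k<length w. f (rotate k (rotate (Suc m) w))) = (\<Sum>k<length w. ?g (Suc k))"
    by (simp only: rotate_rotate add_Suc_right add_Suc)
  also have "\<dots> = (\<Sum>k<length w. f (rotate k w))"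
    using Suc by (simp only: shift rotate_rotate)
  finally show ?case .
qed simp

lemma cyc_tensor_word_append_commute: "cyc_tensor_word (u @ v) = cyc_tensor_word (v @ u)"
proof -
  have "v @ u = rotate (length u) (u @ v)" by (simp add: rotate_append)
  then show ?thesis
    unfolding cyc_tensor_word_def
    using sum_rotate_rotate[where f = head_tensor and w = "u @ v" and m = "length u"] by simp
qed

lemma cyc_tensor_ncmul_commute:
  assumes "p \<in> Aset" "q \<in> Aset"
  shows "cyc_tensor (ncmul p q) = cyc_tensor (ncmul q p)"
proof -
  have "cyc_tensor (ncmul p q) = lin_ext (\<lambda>v. lin_ext (\<lambda>u. cyc_tensor_word (u @ v)) p) q"
    using assms by (simp add: cyc_tensor_def lin_ext_ncmul lin_ext_swap[of _ q p])
  also have "\<dots> = cyc_tensor (ncmul q p)"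
    using assms by (simp add: cyc_tensor_def lin_ext_ncmul cyc_tensor_word_append_commute)
  finally show ?thesis .
qed

lemma cyc_tensor_lie_br: "p \<in> Aset \<Longrightarrow> q \<in> Aset \<Longrightarrow> cyc_tensor (lie_br p q) = 0"
  by (simp add: lie_br_def cyc_tensor_diff Aset_ncmul cyc_tensor_ncmul_commute[of p q])

lemma cyc_tensor_ncmul_lie_br:
  assumes A: "a1 \<in> Aset" "a2 \<in> Aset" "b \<in> Aset"
  shows "cyc_tensor (ncmul (lie_br a1 a2) b) = cyc_tensor (ncmul a2 (lie_br b a1))"
proof -
  have "cyc_tensor (ncmul (lie_br a1 a2) b)
      = cyc_tensor (ncmul a1 (ncmul a2 b)) - cyc_tensor (ncmul a2 (ncmul a1 b))"
    using A by (simp add: lie_br_def module_hom.diff[OF linear_ncmul_left] ncmul_assoc cyc_tensor_diff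
        Aset_ncmul)
  also have "cyc_tensor (ncmul a1 (ncmul a2 b)) = cyc_tensor (ncmul a2 (ncmul b a1))"
    using A by (simp add: cyc_tensor_ncmul_commute[of a1] ncmul_assoc Aset_ncmul)
  also have "cyc_tensor (ncmul a2 (ncmul b a1)) - cyc_tensor (ncmul a2 (ncmul a1 b))
      = cyc_tensor (ncmul a2 (lie_br b a1))"
    using A by (simp add: lie_br_def module_hom.diff[OF linear_ncmul_right] cyc_tensor_diff Aset_ncmul)
  finally show ?thesis .
qed

lemma FL_equiv_tensor_ad_left:
  assumes "P \<in> FreeLie" "X \<in> FreeLie"
  shows "FL_equiv (tensor P (ad_left u X)) (tensor (ad_right u P) X)"
  using assms(1)
proof (induct u arbitrary: P)
  case Nil
  show ?case by (simp only: ad_left.simps ad_right.simps FL_equiv_refl)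
next
  case (Cons d u)
  have "FL_equiv (tensor P (lie_br (gen d) (ad_left u X))) (tensor (lie_br P (gen d)) (ad_left u X))"
    using Cons.prems assms(2) by (simp add: FL_equiv_tensor_lie_br ad_left_FreeLie FreeLie.gen)
  moreover have "FL_equiv (tensor (lie_br P (gen d)) (ad_left u X)) (tensor (ad_right (d # u) P) X)"
    using Cons by (simp add: FreeLie.br FreeLie.gen)
  ultimately show ?case using FL_equiv_trans by simp
qed

lemma FL_equiv_head_tensor_append:
  assumes "x \<noteq> []" "y \<noteq> []"
  shows "FL_equiv (head_tensor (x @ y)) (tensor (rbracket y) (lbracket x))"
proof -
  obtain c x' where x: "x = c # x'" using assms(1) by (cases x) auto
  have "head_tensor (x @ y) = tensor (gen c) (ad_left x' (rbracket y))"
    using assms(2) by (simp add: x rbracket_append)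
  moreover have "FL_equiv (tensor (gen c) (ad_left x' (rbracket y))) (tensor (lbracket x) (rbracket y))"
    using FL_equiv_tensor_ad_left[OF FreeLie.gen rbracket_FreeLie] by (simp add: x)
  moreover have "FL_equiv (tensor (lbracket x) (rbracket y)) (tensor (rbracket y) (lbracket x))"
    by (rule FL_equiv_tensor_swap) auto
  ultimately show ?thesis using FL_equiv_trans by metis
qed

lemma FL_equiv_sum_head_tensor_rotate:
  assumes v: "v \<noteq> []"
  shows "FL_equiv (\<Sum>k<length (c # v). head_tensor (rotate k (c # v)))
    (tensor (gen c) (rbracket v + lbracket v + split_bracket v))"
proof -
  let ?m = "length v"
  let ?cut = "\<lambda>k. tensor (rbracket (c # take k v)) (lbracket (drop k v))"
  have split_off_id: "(\<Sum>k<length (c # v). head_tensor (rotate k (c # v)))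
      = head_tensor (c # v) + (\<Sum>k<?m. head_tensor (drop k v @ c # take k v))"
    unfolding length_Cons sum.lessThan_Suc_shift by (simp add: rotate_drop_take)
  have rotations: "FL_equiv (\<Sum>k<?m. head_tensor (drop k v @ c # take k v)) (\<Sum>k<?m. ?cut k)"
    by (rule FL_equiv_sum, rule FL_equiv_head_tensor_append) auto
  have split_off_0: "(\<Sum>k<?m. ?cut k) = tensor (gen c) (lbracket v) + (\<Sum>k\<in>{1..<?m}. ?cut k)"
    using v by (simp add: lessThan_atLeast0 sum.atLeast_Suc_lessThan)
  have cuts: "FL_equiv (\<Sum>k\<in>{1..<?m}. ?cut k) (tensor (gen c) (split_bracket v))"
    unfolding split_bracket_def module_hom.sum[OF linear_tensor_right]
    by (rule FL_equiv_sum, rule FL_equiv_sym) (auto intro!: FL_equiv_tensor_lie_br FreeLie.gen)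
  have "FL_equiv (\<Sum>k<?m. head_tensor (drop k v @ c # take k v))
      (tensor (gen c) (lbracket v) + tensor (gen c) (split_bracket v))"
    using FL_equiv_trans[OF rotations] FL_equiv_add[OF FL_equiv_refl cuts] split_off_0 by simp
  moreover have "tensor (gen c) (rbracket v + lbracket v + split_bracket v)
      = head_tensor (c # v) + (tensor (gen c) (lbracket v) + tensor (gen c) (split_bracket v))"
    using v by (simp add: module_hom.add[OF linear_tensor_right] add.assoc)
  ultimately show ?thesis
    unfolding split_off_id by (simp add: FL_equiv_add FL_equiv_refl)
qed

definition homogeneous :: "nat \<Rightarrow> ncpoly \<Rightarrow> bool" where
  "homogeneous m p \<longleftrightarrow> (\<forall>z. p z \<noteq> 0 \<longrightarrow> length z = m)"

lemma subspace_homogeneous: "fun_module.subspace {p. homogeneous m p}"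
  unfolding fun_module.subspace_def homogeneous_def
  by (auto simp: plus_fun_apply fscale_apply) (metis add_0)

lemma homogeneous_0: "homogeneous m 0"
  by (simp add: homogeneous_def)

lemma homogeneous_gen: "homogeneous 1 (gen c)"
  by (simp add: homogeneous_def gen_def)

lemma homogeneous_ncmul:
  assumes p: "homogeneous m p" and q: "homogeneous k q"
  shows "homogeneous (m + k) (ncmul p q)"
  unfolding homogeneous_def
proof (intro allI impI)
  fix z assume "ncmul p q z \<noteq> 0"
  then obtain i where i: "i \<le> length z" "p (take i z) \<noteq> 0" "q (drop i z) \<noteq> 0"
    unfolding ncmul_def by (metis (no_types, lifting) atLeastAtMost_iff mult_eq_0_iff sum.neutral)
  then have "length (take i z) = m" "length (drop i z) = k"
    using p q unfolding homogeneous_def by blast+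
  then show "length z = m + k" using i(1) by simp
qed

lemma homogeneous_lie_br: "homogeneous m p \<Longrightarrow> homogeneous k q \<Longrightarrow> homogeneous (m + k) (lie_br p q)"
  using fun_module.subspace_diff[OF subspace_homogeneous]
    homogeneous_ncmul[of m p k q] homogeneous_ncmul[of k q m p]
  by (simp add: lie_br_def add.commute)

lemma homogeneous_ad_right: "homogeneous k X \<Longrightarrow> homogeneous (k + length v) (ad_right v X)"
proof (induct v arbitrary: k X)
  case (Cons d v)
  have "homogeneous (k + 1) (lie_br X (gen d))"
    using Cons.prems homogeneous_gen by (rule homogeneous_lie_br)
  then show ?case using Cons.hyps by fastforce
qed simp

lemma homogeneous_rbracket: "homogeneous (length w) (rbracket w)"
proof (induct w)
  case Nil
  show ?case by (simp only: rbracket.simps homogeneous_0)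
next
  case (Cons c v)
  then show ?case
    using homogeneous_gen[of c] homogeneous_lie_br[OF homogeneous_gen Cons] by (simp add: One_nat_def)
qed

lemma homogeneous_lbracket: "homogeneous (length w) (lbracket w)"
proof (cases w)
  case Nil
  then show ?thesis by (simp only: lbracket.simps homogeneous_0)
next
  case (Cons c u)
  then show ?thesis using homogeneous_ad_right[OF homogeneous_gen, of u] by simp
qed

lemma homogeneous_split_bracket: "homogeneous (length w) (split_bracket w)"
  unfolding split_bracket_def
proof (rule fun_module.subspace_sum[OF subspace_homogeneous, simplified])
  fix j assume "j \<in> {1..<length w}"
  then have "length w = length (take j w) + length (drop j w)" by auto
  then show "homogeneous (length w) (lie_br (rbracket (take j w)) (lbracket (drop j w)))"
    by (metis homogeneous_lie_br homogeneous_rbracket homogeneous_lbracket)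
qed

lemma lin_ext_homogeneous_scale:
  assumes "\<And>v. homogeneous (length v) (S v)"
  shows "lin_ext (\<lambda>v. fscale (h (length v)) (S v)) p = (\<lambda>z. h (length z) * lin_ext S p z)"
proof (rule ext)
  fix z
  have term_eq: "p w * (h (length w) * S w z) = h (length z) * (p w * S w z)" for w
    using assms[of w] unfolding homogeneous_def by (cases "S w z = 0") auto
  have "(\<Sum>w\<in>supp p. p w * (h (length w) * S w z)) = (\<Sum>w\<in>supp p. h (length z) * (p w * S w z))"
    by (rule sum.cong[OF refl]) (rule term_eq)
  then show "lin_ext (\<lambda>v. fscale (h (length v)) (S v)) p z = h (length z) * lin_ext S p z"
    by (simp add: lin_ext_apply fscale_apply sum_distrib_left)
qed

text \<open>The three bracketings contribute \<open>n + n + (n\<^sup>2 - n) = n (n + 1)\<close> times a homogeneous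
  element of degree \<open>n\<close>, which explains the normalising factor.\<close>

lemma lin_ext_normalised_brackets:
  assumes b: "b \<in> FreeLie"
  shows "lin_ext (\<lambda>v. fscale (1 / (real (length v + 1) * real (length v)))
      (rbracket v + lbracket v + split_bracket v)) b = b"
proof -
  let ?S = "\<lambda>v. rbracket v + lbracket v + split_bracket v"
  have "homogeneous (length v) (?S v)" for v
    using fun_module.subspace_add[OF subspace_homogeneous]
    by (simp add: homogeneous_rbracket homogeneous_lbracket homogeneous_split_bracket)
  then have "lin_ext (\<lambda>v. fscale (1 / (real (length v + 1) * real (length v))) (?S v)) b
      = (\<lambda>z. 1 / (real (length z + 1) * real (length z)) * lin_ext ?S b z)"
    by (rule lin_ext_homogeneous_scale)
  also have "lin_ext ?S b = euler b + euler b + (euler (euler b) - euler b)"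
    using b by (simp add: lin_ext_fun_add lin_ext_rbracket lin_ext_lbracket lin_ext_split_bracket)
  finally have lin_ext_eq: "lin_ext (\<lambda>v. fscale (1 / (real (length v + 1) * real (length v))) (?S v)) b
      = (\<lambda>z. 1 / (real (length z + 1) * real (length z))
          * (euler b + euler b + (euler (euler b) - euler b)) z)" .
  have "1 / (real (length z + 1) * real (length z))
      * (euler b + euler b + (euler (euler b) - euler b)) z = b z" for z
  proof (cases "z = []")
    case True
    then show ?thesis using FreeLie_Nil[OF b] by (simp add: euler_def plus_fun_apply minus_apply)
  next
    case False
    then have "real (length z) > 0" by simp
    then have "real (length z) + real (length z) * real (length z) \<noteq> 0"
      by (metis add_pos_pos mult_pos_pos less_irrefl)
    then show ?thesis by (simp add: euler_def plus_fun_apply minus_apply field_simps)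
  qed
  then show ?thesis unfolding lin_ext_eq by (rule ext)
qed

lemma FL_equiv_cyc_tensor_gen_ncmul:
  assumes b: "b \<in> FreeLie"
  shows "FL_equiv (cyc_tensor (ncmul (gen c) b)) (tensor (gen c) b)"
proof -
  let ?h = "\<lambda>v. 1 / (real (length v + 1) * real (length v))"
  let ?S = "\<lambda>v. rbracket v + lbracket v + split_bracket v"
  have "cyc_tensor (ncmul (gen c) b) = lin_ext (\<lambda>v. cyc_tensor_word (c # v)) b"
    using b by (simp add: cyc_tensor_def gen_eq_monomial lin_ext_ncmul FreeLie_Aset)
  moreover have "FL_equiv (lin_ext (\<lambda>v. cyc_tensor_word (c # v)) b)
      (lin_ext (\<lambda>v. fscale (?h v) (tensor (gen c) (?S v))) b)"
  proof (rule FL_equiv_lin_ext)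
    fix v assume "v \<in> supp b"
    then have "v \<noteq> []" using Nil_notin_supp_FreeLie[OF b] by blast
    then show "FL_equiv (cyc_tensor_word (c # v)) (fscale (?h v) (tensor (gen c) (?S v)))"
      using FL_equiv_scale[OF FL_equiv_sum_head_tensor_rotate] by (simp add: cyc_tensor_word_def)
  qed
  moreover have "lin_ext (\<lambda>v. fscale (?h v) (tensor (gen c) (?S v))) b = tensor (gen c) b"
    using lin_ext_normalised_brackets[OF b]
    by (simp add: linear_fun_lin_ext[OF linear_tensor_right, symmetric]
        module_hom.scale[OF linear_tensor_right, symmetric])
  ultimately show ?thesis by simp
qed

lemma FL_equiv_cyc_tensor_ncmul:
  assumes "a \<in> FreeLie" "b \<in> FreeLie"
  shows "FL_equiv (cyc_tensor (ncmul a b)) (tensor a b)"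
  using assms
proof (induct a arbitrary: b rule: FreeLie.induct)
  case (gen c)
  then show ?case by (rule FL_equiv_cyc_tensor_gen_ncmul)
next
  case (add a1 a2)
  then show ?case
    using FL_equiv_add[OF add.hyps(2)[OF add.prems] add.hyps(4)[OF add.prems]]
    by (simp add: module_hom.add[OF linear_ncmul_left] module_hom.add[OF linear_tensor_left]
        cyc_tensor_add FreeLie_Aset Aset_ncmul)
next
  case (scale a c)
  then show ?case
    using FL_equiv_scale[OF scale.hyps(2)[OF scale.prems], of c]
    by (simp add: module_hom.scale[OF linear_ncmul_left] module_hom.scale[OF linear_tensor_left]
        cyc_tensor_scale)
next
  case (br a1 a2)
  have rotated: "cyc_tensor (ncmul (lie_br a1 a2) b) = cyc_tensor (ncmul a2 (lie_br b a1))"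
    using br by (simp add: cyc_tensor_ncmul_lie_br FreeLie_Aset)
  have "FL_equiv (cyc_tensor (ncmul a2 (lie_br b a1))) (tensor a2 (lie_br b a1))"
    using br by (simp add: FreeLie.br)
  moreover have "FL_equiv (tensor a2 (lie_br b a1)) (tensor (lie_br a2 b) a1)"
    using br by (simp add: FL_equiv_tensor_lie_br)
  moreover have "FL_equiv (tensor (lie_br a2 b) a1) (tensor a1 (lie_br a2 b))"
    using br by (simp add: FL_equiv_tensor_swap FreeLie.br)
  moreover have "FL_equiv (tensor a1 (lie_br a2 b)) (tensor (lie_br a1 a2) b)"
    using br by (simp add: FL_equiv_tensor_lie_br)
  ultimately show ?case unfolding rotated by (meson FL_equiv_trans)
qed

lemma FL_equiv_cyc_tensor_mulmap:
  assumes "t \<in> LtensL"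
  shows "mulmap t \<in> Aset \<and> FL_equiv (cyc_tensor (mulmap t)) t"
  using assms unfolding LtensL_def
proof (induct rule: fun_module.span_induct_alt)
  case base
  show ?case
    by (simp only: module_hom.zero[OF linear_mulmap] cyc_tensor_zero FL_equiv_refl Aset_zero simp_thms)
next
  case (step c x y)
  then obtain a b where x: "x = tensor a b" and ab: "a \<in> FreeLie" "b \<in> FreeLie" by blast
  then have "ncmul a b \<in> Aset" by (simp add: FreeLie_Aset Aset_ncmul)
  moreover have "mulmap (fscale c x + y) = fscale c (ncmul a b) + mulmap y"
    by (simp add: module_hom.add[OF linear_mulmap] module_hom.scale[OF linear_mulmap] x mulmap_tensor)
  moreover have "FL_equiv (fscale c (cyc_tensor (ncmul a b)) + cyc_tensor (mulmap y)) (fscale c x + y)"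
    using step x FL_equiv_cyc_tensor_ncmul[OF ab] by (intro FL_equiv_add FL_equiv_scale) simp_all
  ultimately show ?case
    using step by (simp add: cyc_tensor_add cyc_tensor_scale Aset_add Aset_scale)
qed

lemma cyc_tensor_commA:
  assumes "p \<in> commA"
  shows "p \<in> Aset \<and> cyc_tensor p = 0"
  using assms unfolding commA_def
proof (induct rule: fun_module.span_induct_alt)
  case base
  show ?case by (simp only: cyc_tensor_zero Aset_zero simp_thms)
next
  case (step c x y)
  then obtain p q where "x = lie_br p q" "p \<in> Aset" "q \<in> Aset" by blast
  then show ?case
    using step
    by (simp add: Aset_add Aset_scale Aset_lie_br cyc_tensor_add cyc_tensor_scale cyc_tensor_lie_br)
qed

theorem mainTheorem4:
  assumes "t \<in> LtensL"
    and "mulmap t \<in> commA"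
  shows "t \<in> FL_rel"
proof -
  have "FL_equiv (cyc_tensor (mulmap t)) t"
    using FL_equiv_cyc_tensor_mulmap[OF assms(1)] ..
  moreover have "cyc_tensor (mulmap t) = 0"
    using cyc_tensor_commA[OF assms(2)] ..
  ultimately show ?thesis
    using FL_equiv_sym[of "cyc_tensor (mulmap t)" t] by simp
qed

end
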